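(* Let $x\in H$ with $\langle x,R_0x\rangle>0$. Then the random variables $A_k(\omega)=\langle x,\Delta_k(\omega)x\rangle$, $k\ge1$, are nonnegative and $\nu_x$-integrable, and $\langle x,R_0x\rangle=\mathbb E_{\nu_x}[\langle x,R_\infty(\omega)x\rangle]+\sum_{k=1}^\infty\mathbb E_{\nu_x}[A_k]$. In particular $\sum_{k=1}^\infty\mathbb E_{\nu_x}[A_k]=\langle x,R_0x\rangle-\mathbb E_{\nu_x}[\langle x,R_\infty(\omega)x\rangle]<\infty$.
   Context: Let $H$ be a complex Hilbert space, $m\ge2$, $P_1,\dots,P_m$ orthogonal projections on $H$, $R_0\in B(H)_+$. Let $\mathcal A=\{1,\dots,m\}$, $\mathcal W$ the set of finite words over $\mathcal A$ (including the empty word $\emptyset$); for nonempty $w=j_1\cdots j_n$, $w^-=j_1\cdots j_{n-1}$, and $wj$ is concatenation. WR energy tree: $R_\emptyset=R_0$, and for $w=j_1\cdots j_n$, $n\ge1$, $R_w=R_{w^-}^{1/2}(I-P_{j_n})R_{w^-}^{1/2}$, $D_w=R_{w^-}^{1/2}P_{j_n}R_{w^-}^{1/2}$. $\Omega=\mathcal A^{\mathbb N}$; for $\omega=(j_1,j_2,\dots)$, $\omega|_n=j_1\cdots j_n$, $\omega|_0=\emptyset$; cylinders $[w]=\{\omega:\omega|_{|w|}=w\}$. $R_\infty(\omega)$ is the strong limit of the Loewner-decreasing sequence $R_{\omega|_n}$. The step-$k$ dissipated operator along $\omega$ is $\Delta_k(\omega)=D_{\omega|_k}=R_{\omega|_{k-1}}^{1/2}P_{j_k}R_{\omega|_{k-1}}^{1/2}$.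 Energy-biased path measure: with $x$ fixed, $a_{wj}=\langle x,D_{wj}x\rangle$, a fixed probability vector $q$ on $\mathcal A$, $p_x(j\mid w)=a_{wj}/\sum_k a_{wk}$ if $\sum_ka_{wk}>0$ and $p_x(j\mid w)=q_j$ otherwise; $\nu_x$ is the unique Borel probability measure on $\Omega$ with $\nu_x([j_1\cdots j_n])=\prod_{i=1}^n p_x(j_i\mid j_1\cdots j_{i-1})$. *)

theory Defs
  imports "HOL-Analysis.Analysis" "HOL-Probability.Probability" "HOL-Library.Complex_Order"
begin

text \<open>The distribution has no complex vector space hierarchy, so we introduce one:
  a real normed vector space with a complex scalar multiplication compatible with the
  real one, and a complex inner product (linear in the second argument, conjugate linear
  in the first) inducing the norm.\<close>

class complex_inner = real_normed_vector +
  fixes scaleC :: "complex \<Rightarrow> 'a \<Rightarrow> 'a"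
    and cinner :: "'a \<Rightarrow> 'a \<Rightarrow> complex"
  assumes scaleC_add_right: "scaleC a (x + y) = scaleC a x + scaleC a y"
    and scaleC_add_left: "scaleC (a + b) x = scaleC a x + scaleC b x"
    and scaleC_scaleC: "scaleC a (scaleC b x) = scaleC (a * b) x"
    and scaleC_one: "scaleC 1 x = x"
    and scaleR_scaleC: "scaleR r x = scaleC (complex_of_real r) x"
    and cinner_cnj: "cinner x y = cnj (cinner y x)"
    and cinner_add_right: "cinner x (y + z) = cinner x y + cinner x z"
    and cinner_scaleC_right: "cinner x (scaleC a y) = a * cinner x y"
    and cinner_ge_zero: "0 \<le> cinner x x"
    and cinner_eq_zero_iff: "cinner x x = 0 \<longleftrightarrow> x = 0"
    and norm_eq_sqrt_cinner: "norm x = sqrt (Re (cinner x x))"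

class chilbert_space = complex_inner + complete_space

definition bounded_op :: "('a::complex_inner \<Rightarrow> 'a) \<Rightarrow> bool" where
  "bounded_op T \<longleftrightarrow> bounded_linear T \<and> (\<forall>c x. T (scaleC c x) = scaleC c (T x))"

definition positive_op :: "('a::complex_inner \<Rightarrow> 'a) \<Rightarrow> bool" where
  "positive_op T \<longleftrightarrow> bounded_op T \<and> (\<forall>x. 0 \<le> cinner x (T x))"

definition orth_proj :: "('a::complex_inner \<Rightarrow> 'a) \<Rightarrow> bool" where
  "orth_proj P \<longleftrightarrow> bounded_op P \<and> P \<circ> P = P \<and> (\<forall>x y. cinner (P x) y = cinner x (P y))"

text \<open>The (unique) positive square root of a positive operator.\<close>
definition op_sqrt :: "('a::complex_inner \<Rightarrow> 'a) \<Rightarrow> ('a \<Rightarrow> 'a)" where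
  "op_sqrt R = (THE S. positive_op S \<and> S \<circ> S = R)"

text \<open>Words over \<open>{1..m}\<close> are lists of naturals; projections are indexed \<open>P j\<close>.
  \<open>R_rev\<close> works on reversed words so that the last letter is the head.\<close>
fun R_rev :: "(nat \<Rightarrow> 'a::complex_inner \<Rightarrow> 'a) \<Rightarrow> ('a \<Rightarrow> 'a) \<Rightarrow> nat list \<Rightarrow> ('a \<Rightarrow> 'a)" where
  "R_rev P R0 [] = R0"
| "R_rev P R0 (j # v) = op_sqrt (R_rev P R0 v) \<circ> (\<lambda>y. y - P j y) \<circ> op_sqrt (R_rev P R0 v)"

definition R_word :: "(nat \<Rightarrow> 'a::complex_inner \<Rightarrow> 'a) \<Rightarrow> ('a \<Rightarrow> 'a) \<Rightarrow> nat list \<Rightarrow> ('a \<Rightarrow> 'a)" where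
  "R_word P R0 w = R_rev P R0 (rev w)"

definition D_word :: "(nat \<Rightarrow> 'a::complex_inner \<Rightarrow> 'a) \<Rightarrow> ('a \<Rightarrow> 'a) \<Rightarrow> nat list \<Rightarrow> ('a \<Rightarrow> 'a)" where
  "D_word P R0 w = op_sqrt (R_word P R0 (butlast w)) \<circ> P (last w) \<circ> op_sqrt (R_word P R0 (butlast w))"

text \<open>A path \<open>\<omega> = (j_1, j_2, \<dots>)\<close> is a function \<open>nat \<Rightarrow> nat\<close> with \<open>\<omega> i = j_{i+1}\<close>.\<close>
definition prefix :: "(nat \<Rightarrow> nat) \<Rightarrow> nat \<Rightarrow> nat list" where
  "prefix \<omega> n = map \<omega> [0..<n]"

text \<open>Path space \<open>\<Omega> = A^\<nat>\<close> with its product (= Borel) sigma algebra.\<close>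
definition path_space :: "nat \<Rightarrow> (nat \<Rightarrow> nat) measure" where
  "path_space m = PiM UNIV (\<lambda>_. count_space {1..m})"

definition cylinder :: "nat \<Rightarrow> nat list \<Rightarrow> (nat \<Rightarrow> nat) set" where
  "cylinder m w = {\<omega> \<in> space (path_space m). prefix \<omega> (length w) = w}"

definition R_inf :: "(nat \<Rightarrow> 'a::complex_inner \<Rightarrow> 'a) \<Rightarrow> ('a \<Rightarrow> 'a) \<Rightarrow> (nat \<Rightarrow> nat) \<Rightarrow> ('a \<Rightarrow> 'a)" where
  "R_inf P R0 \<omega> = (\<lambda>y. lim (\<lambda>n. R_word P R0 (prefix \<omega> n) y))"

definition Delta :: "(nat \<Rightarrow> 'a::complex_inner \<Rightarrow> 'a) \<Rightarrow> ('a \<Rightarrow> 'a) \<Rightarrow> nat \<Rightarrow> (nat \<Rightarrow> nat) \<Rightarrow> ('a \<Rightarrow> 'a)" where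
  "Delta P R0 k \<omega> = D_word P R0 (prefix \<omega> k)"

text \<open>\<open>a_{wj} = \<langle>x, D_{wj} x\<rangle>\<close> (a nonnegative real, as \<open>D_{wj}\<close> is positive; we take its real part).\<close>
definition energy_a :: "(nat \<Rightarrow> 'a::complex_inner \<Rightarrow> 'a) \<Rightarrow> ('a \<Rightarrow> 'a) \<Rightarrow> 'a \<Rightarrow> nat list \<Rightarrow> nat \<Rightarrow> real" where
  "energy_a P R0 x w j = Re (cinner x (D_word P R0 (w @ [j]) x))"

definition p_cond :: "nat \<Rightarrow> (nat \<Rightarrow> 'a::complex_inner \<Rightarrow> 'a) \<Rightarrow> ('a \<Rightarrow> 'a) \<Rightarrow> (nat \<Rightarrow> real) \<Rightarrow> 'a
    \<Rightarrow> nat list \<Rightarrow> nat \<Rightarrow> real" where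
  "p_cond m P R0 q x w j =
     (let s = (\<Sum>k\<in>{1..m}. energy_a P R0 x w k)
      in if s > 0 then energy_a P R0 x w j / s else q j)"

text \<open>\<open>\<nu>\<close> is the energy-biased path measure \<open>\<nu>_x\<close>: a probability measure on \<open>\<Omega>\<close> with the
  prescribed cylinder probabilities (such a measure is unique).\<close>
definition is_path_measure :: "nat \<Rightarrow> (nat \<Rightarrow> 'a::complex_inner \<Rightarrow> 'a) \<Rightarrow> ('a \<Rightarrow> 'a) \<Rightarrow> (nat \<Rightarrow> real)
    \<Rightarrow> 'a \<Rightarrow> (nat \<Rightarrow> nat) measure \<Rightarrow> bool" where
  "is_path_measure m P R0 q x \<nu> \<longleftrightarrow>
     prob_space \<nu> \<and> sets \<nu> = sets (path_space m) \<and>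
     (\<forall>w. set w \<subseteq> {1..m} \<longrightarrow>
        measure \<nu> (cylinder m w) = (\<Prod>i<length w. p_cond m P R0 q x (take i w) (w ! i)))"

end

theory Submission
  imports Defs
begin

text \<open>Along a path \<open>\<omega>\<close> the energies telescope: \<open>R_w^{1/2} ((I - P_j) + P_j) R_w^{1/2} = R_w\<close>
  gives \<open>R_w = R_{wj} + D_{wj}\<close>, hence \<open>\<langle>x,R_0 x\<rangle> = \<langle>x,R_{\<omega>|n} x\<rangle> + A_1(\<omega>) + \<dots> + A_n(\<omega>)\<close>
  with all terms nonnegative, so each term is bounded by \<open>\<langle>x,R_0 x\<rangle>\<close>. The decreasing
  positive operators \<open>R_{\<omega>|n}\<close> converge strongly, and dominated convergence integrates the
  identity and passes to the limit. The analytic input is the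
  existence of positive square roots, obtained from the power series of \<open>1 - \<surd>(1 - t)\<close>
  evaluated at a positive contraction.\<close>

section \<open>Complex inner product spaces\<close>

lemma cinner_add_left: "cinner (x + y) z = cinner x z + cinner (y::'a::complex_inner) z"
  by (metis cinner_cnj cinner_add_right complex_cnj_add)

lemma cinner_scaleC_left: "cinner (scaleC a x) (y::'a::complex_inner) = cnj a * cinner x y"
  by (metis cinner_cnj cinner_scaleC_right complex_cnj_mult complex_cnj_cnj)

lemma cinner_scaleR_right: "cinner x (scaleR r y) = of_real r * cinner x (y::'a::complex_inner)"
  by (simp add: scaleR_scaleC cinner_scaleC_right)

lemma cinner_scaleR_left: "cinner (scaleR r x) y = of_real r * cinner x (y::'a::complex_inner)"
  by (simp add: scaleR_scaleC cinner_scaleC_left)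

lemma cinner_zero_right [simp]: "cinner x (0::'a::complex_inner) = 0"
  using cinner_add_right[of x 0 0] by simp

lemma cinner_minus_right: "cinner x (- y) = - cinner x (y::'a::complex_inner)"
  using cinner_scaleR_right[of x "-1" y] by simp

lemma cinner_minus_left: "cinner (- x) y = - cinner x (y::'a::complex_inner)"
  using cinner_scaleR_left[of "-1" x y] by simp

lemma cinner_diff_right: "cinner x (y - z) = cinner x y - cinner x (z::'a::complex_inner)"
  by (simp only: diff_conv_add_uminus cinner_add_right cinner_minus_right)

lemma cinner_diff_left: "cinner (x - y) z = cinner x z - cinner y (z::'a::complex_inner)"
  by (simp only: diff_conv_add_uminus cinner_add_left cinner_minus_left)

lemma cinner_self_eq_norm: "cinner x x = of_real ((norm (x::'a::complex_inner))\<^sup>2)"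
proof -
  have "Im (cinner x x) = 0" and "0 \<le> Re (cinner x x)"
    using cinner_ge_zero[of x] by (auto simp: less_eq_complex_def)
  then show ?thesis by (simp add: norm_eq_sqrt_cinner complex_eq_iff)
qed

lemma scaleC_diff_right: "scaleC a (x - y) = scaleC a x - scaleC a (y::'a::complex_inner)"
  using scaleC_add_right[of a "x - y" y] by (simp add: eq_diff_eq)

lemma scaleC_scaleR_commute: "scaleC a (scaleR r x) = scaleR r (scaleC a (x::'a::complex_inner))"
  by (simp add: scaleR_scaleC scaleC_scaleC mult.commute)

lemma norm_scaleC: "norm (scaleC a x) = cmod a * norm (x::'a::complex_inner)"
proof -
  have "cinner (scaleC a x) (scaleC a x) = cnj a * a * cinner x x"
    by (simp add: cinner_scaleC_left cinner_scaleC_right mult.assoc)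
  then have "of_real ((norm (scaleC a x))\<^sup>2) = cnj a * a * of_real ((norm x)\<^sup>2)"
    by (simp only: cinner_self_eq_norm)
  also have "cnj a * a = of_real ((cmod a)\<^sup>2)"
    by (metis complex_norm_square mult.commute complex_cnj_cnj)
  finally have "(norm (scaleC a x))\<^sup>2 = (cmod a * norm x)\<^sup>2"
    by (metis of_real_eq_iff of_real_mult power_mult_distrib)
  then show ?thesis by (simp add: power2_eq_iff_nonneg)
qed

lemma bounded_linear_scaleC: "bounded_linear (scaleC a :: 'a::complex_inner \<Rightarrow> 'a)"
  by (rule bounded_linear_intro[where K="cmod a"])
     (simp_all add: scaleC_add_right scaleC_scaleR_commute norm_scaleC mult.commute)

section \<open>Bounded and positive operators\<close>

lemma bounded_op_linear: "bounded_op T \<Longrightarrow> bounded_linear T"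
  by (simp add: bounded_op_def)

lemma bounded_op_scaleC: "bounded_op T \<Longrightarrow> T (scaleC c x) = scaleC c (T x)"
  by (simp add: bounded_op_def)

lemma bounded_op_add: "bounded_op T \<Longrightarrow> T (x + y) = T x + T y"
  using bounded_op_linear[THEN bounded_linear.linear] linear_add by blast

lemma bounded_op_diff: "bounded_op T \<Longrightarrow> T (x - y) = T x - T y"
  using bounded_op_linear[THEN bounded_linear.linear] linear_diff by blast

lemma bounded_op_scaleR: "bounded_op T \<Longrightarrow> T (scaleR r x) = scaleR r (T x)"
  using bounded_op_linear[THEN bounded_linear.linear] linear_scale by blast

lemma bounded_op_sum: "bounded_op T \<Longrightarrow> T (sum f A) = (\<Sum>a\<in>A. T (f a))"
  using bounded_op_linear[THEN bounded_linear.linear] linear_sum by blast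

lemma bounded_op_ident: "bounded_op (\<lambda>x::'a::complex_inner. x)"
  by (simp add: bounded_op_def)

lemma bounded_op_comp: "bounded_op S \<Longrightarrow> bounded_op T \<Longrightarrow> bounded_op (S \<circ> T)"
  by (simp add: bounded_op_def bounded_linear_compose comp_def)

lemma bounded_op_minus: "bounded_op S \<Longrightarrow> bounded_op T \<Longrightarrow> bounded_op (\<lambda>x. S x - T x)"
  by (simp add: bounded_op_def bounded_linear_sub scaleC_diff_right)

lemma bounded_op_scaleR_left: "bounded_op T \<Longrightarrow> bounded_op (\<lambda>x. scaleR r (T x))"
  by (simp add: bounded_op_def bounded_linear_compose[OF bounded_linear_scaleR_right]
      scaleC_scaleR_commute)

lemma bounded_op_funpow: "bounded_op T \<Longrightarrow> bounded_op (T ^^ n)"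
  by (induction n) (simp_all add: bounded_op_ident id_def bounded_op_comp)

lemma positive_op_bounded: "positive_op T \<Longrightarrow> bounded_op T"
  by (simp add: positive_op_def)

lemma positive_op_nonneg: "positive_op T \<Longrightarrow> 0 \<le> cinner y (T y)"
  by (simp add: positive_op_def)

lemma positive_op_Im: "positive_op T \<Longrightarrow> Im (cinner y (T y)) = 0"
  using positive_op_nonneg[of T y] by (simp add: less_eq_complex_def)

lemma positive_op_Re_nonneg: "positive_op T \<Longrightarrow> 0 \<le> Re (cinner y (T y))"
  using positive_op_nonneg[of T y] by (simp add: less_eq_complex_def)

lemma positive_op_cinner_real: "positive_op T \<Longrightarrow> cinner y (T y) = of_real (Re (cinner y (T y)))"
  using positive_op_Im by (simp add: complex_eq_iff)

lemma cinner_op_scaleC_add: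
  assumes "bounded_op T"
  shows "cinner (scaleC a u + scaleC b v) (T (scaleC a u + scaleC b v)) =
     cnj a * a * cinner u (T u) + cnj a * b * cinner u (T v)
     + cnj b * a * cinner v (T u) + cnj b * b * cinner v (T v)"
  using assms by (simp add: bounded_op_add bounded_op_scaleC cinner_add_left cinner_add_right
      cinner_scaleC_left cinner_scaleC_right algebra_simps)

definition self_adjoint :: "('a::complex_inner \<Rightarrow> 'a) \<Rightarrow> bool" where
  "self_adjoint T \<longleftrightarrow> (\<forall>u v. cinner u (T v) = cinner (T u) v)"

text \<open>Over \<open>\<complex>\<close> a real-valued quadratic form forces self-adjointness: the imaginary parts
  of the form at \<open>u + v\<close> and \<open>u + i v\<close> give \<open>\<langle>u,Tv\<rangle> = \<langle>Tu,v\<rangle>\<close>.\<close>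
lemma positive_op_self_adjoint:
  assumes T: "positive_op T"
  shows "self_adjoint T"
  unfolding self_adjoint_def
proof (intro allI)
  fix u v
  have b: "bounded_op T" using T by (rule positive_op_bounded)
  have "Im (cinner u (T v)) + Im (cinner v (T u)) = 0"
    using arg_cong[OF cinner_op_scaleC_add[OF b, of 1 u 1 v], of Im] positive_op_Im[OF T]
    by (simp add: scaleC_one)
  moreover have "Re (cinner u (T v)) - Re (cinner v (T u)) = 0"
    using arg_cong[OF cinner_op_scaleC_add[OF b, of 1 u \<i> v], of Im] positive_op_Im[OF T]
    by (simp add: scaleC_one)
  moreover have "cinner (T u) v = cnj (cinner v (T u))" by (rule cinner_cnj)
  ultimately show "cinner u (T v) = cinner (T u) v" by (simp add: complex_eq_iff)
qed

lemma self_adjoint_Im: "self_adjoint T \<Longrightarrow> Im (cinner y (T y)) = 0"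
  unfolding self_adjoint_def by (metis Reals_cnj_iff cinner_cnj complex_is_Real_iff)

lemma self_adjoint_funpow: "self_adjoint T \<Longrightarrow> self_adjoint (T ^^ n)"
proof (induction n)
  case (Suc n)
  then show ?case
    unfolding self_adjoint_def by (metis funpow.simps(2) funpow_swap1 o_apply)
qed (simp add: self_adjoint_def)

lemma self_adjoint_minus: "self_adjoint S \<Longrightarrow> self_adjoint T \<Longrightarrow> self_adjoint (\<lambda>x. S x - T x)"
  by (simp add: self_adjoint_def cinner_diff_left cinner_diff_right)

lemma discriminant_le_if_quadratic_nonneg:
  fixes a b c :: real
  assumes "0 \<le> a" and nonneg: "\<And>t. 0 \<le> a * t\<^sup>2 - 2 * b * t + c"
  shows "b\<^sup>2 \<le> a * c"
proof (cases "a = 0")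
  case True
  have "b = 0"
  proof (rule ccontr)
    assume "b \<noteq> 0"
    then show False using nonneg[of "(c + 1) / (2 * b)"] True by (simp add: field_simps)
  qed
  then show ?thesis using True by simp
next
  case False
  then have "0 < a" using \<open>0 \<le> a\<close> by simp
  then show ?thesis using nonneg[of "b / a"] by (simp add: field_simps power2_eq_square)
qed

text \<open>Cauchy-Schwarz for the semi-inner product \<open>\<langle>u,Bv\<rangle>\<close>, from the quadratic form at
  \<open>u - t\<langle>v,Bu\<rangle>v\<close>, \<open>t\<close> real.\<close>
lemma positive_op_Cauchy_Schwarz:
  assumes B: "positive_op B"
  shows "(cmod (cinner u (B v)))\<^sup>2 \<le> Re (cinner u (B u)) * Re (cinner v (B v))"
proof -
  define \<alpha> where "\<alpha> = cinner v (B u)"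
  have uv: "cinner u (B v) = cnj \<alpha>"
    unfolding \<alpha>_def using positive_op_self_adjoint[OF B] cinner_cnj[of "B u" v]
    by (simp add: self_adjoint_def)
  have "0 \<le> ((cmod \<alpha>)\<^sup>2 * Re (cinner v (B v))) * t\<^sup>2 - 2 * (cmod \<alpha>)\<^sup>2 * t + Re (cinner u (B u))"
    for t
  proof -
    let ?w = "scaleC 1 u + scaleC (- (of_real t * \<alpha>)) v"
    have "Re (cinner ?w (B ?w)) =
        ((cmod \<alpha>)\<^sup>2 * Re (cinner v (B v))) * t\<^sup>2 - 2 * (cmod \<alpha>)\<^sup>2 * t + Re (cinner u (B u))"
      unfolding cinner_op_scaleC_add[OF positive_op_bounded[OF B]] uv \<alpha>_def[symmetric]
      using positive_op_Im[OF B, of u] positive_op_Im[OF B, of v]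
        cmod_power2[of \<alpha>, unfolded power2_eq_square]
      by (simp add: algebra_simps power2_eq_square)
    then show ?thesis using positive_op_Re_nonneg[OF B, of ?w] by simp
  qed
  then have "((cmod \<alpha>)\<^sup>2)\<^sup>2 \<le> ((cmod \<alpha>)\<^sup>2 * Re (cinner v (B v))) * Re (cinner u (B u))"
    by (intro discriminant_le_if_quadratic_nonneg positive_op_Re_nonneg[OF B] mult_nonneg_nonneg)
      simp_all
  then have "(cmod \<alpha>)\<^sup>2 * (cmod \<alpha>)\<^sup>2 \<le> (cmod \<alpha>)\<^sup>2 * (Re (cinner u (B u)) * Re (cinner v (B v)))"
    by (simp add: power2_eq_square mult.assoc mult.left_commute mult.commute)
  then show ?thesis
  proof (cases "\<alpha> = 0")
    case False
    then have "0 < (cmod \<alpha>)\<^sup>2" by simp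
    with \<open>(cmod \<alpha>)\<^sup>2 * (cmod \<alpha>)\<^sup>2 \<le> _\<close> show ?thesis
      unfolding uv complex_mod_cnj by (metis mult_le_cancel_left_pos)
  qed (use uv positive_op_Re_nonneg[OF B] in simp)
qed

lemma positive_op_ident: "positive_op (\<lambda>x::'a::complex_inner. x)"
  by (simp add: positive_op_def bounded_op_ident cinner_ge_zero)

lemma norm_cinner_le: "cmod (cinner u v) \<le> norm u * norm (v::'a::complex_inner)"
proof -
  have "(cmod (cinner u v))\<^sup>2 \<le> (norm u * norm v)\<^sup>2"
    using positive_op_Cauchy_Schwarz[OF positive_op_ident, of u v]
    by (simp add: cinner_self_eq_norm power_mult_distrib)
  then show ?thesis by (rule power2_le_imp_le) simp
qed

lemma bounded_linear_cinner_right: "bounded_linear (cinner (y::'a::complex_inner))"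
proof (rule bounded_linear_intro[where K="norm y"])
  show "cinner y (a + b) = cinner y a + cinner y b" for a b by (rule cinner_add_right)
  show "cinner y (r *\<^sub>R a) = r *\<^sub>R cinner y a" for r a
    by (simp add: cinner_scaleR_right scaleR_conv_of_real)
  show "norm (cinner y a) \<le> norm a * norm y" for a
    using norm_cinner_le[of y a] by (simp add: mult.commute)
qed

lemma Re_cinner_op_le_onorm: "bounded_op T \<Longrightarrow> Re (cinner y (T y)) \<le> onorm T * (norm y)\<^sup>2"
proof -
  assume "bounded_op T"
  have "Re (cinner y (T y)) \<le> norm y * norm (T y)"
    using complex_Re_le_cmod norm_cinner_le order_trans by blast
  also have "\<dots> \<le> norm y * (onorm T * norm y)"
    using onorm[OF bounded_op_linear[OF \<open>bounded_op T\<close>]] by (simp add: mult_left_mono)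
  finally show ?thesis by (simp add: power2_eq_square algebra_simps)
qed

lemma positive_op_norm_le:
  assumes B: "positive_op B" and le: "\<And>y. Re (cinner y (B y)) \<le> K * (norm y)\<^sup>2"
  shows "(norm (B z))\<^sup>2 \<le> K * Re (cinner z (B z))"
proof (cases "B z = 0")
  case True
  then show ?thesis by simp
next
  case False
  have "((norm (B z))\<^sup>2)\<^sup>2 \<le> Re (cinner (B z) (B (B z))) * Re (cinner z (B z))"
    using positive_op_Cauchy_Schwarz[OF B, of "B z" z] by (simp add: cinner_self_eq_norm norm_power)
  also have "\<dots> \<le> (K * (norm (B z))\<^sup>2) * Re (cinner z (B z))"
    using le[of "B z"] positive_op_Re_nonneg[OF B, of z] by (simp add: mult_right_mono)
  finally have h: "(norm (B z))\<^sup>2 * (norm (B z))\<^sup>2 \<le> (norm (B z))\<^sup>2 * (K * Re (cinner z (B z)))"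
    by (simp add: power2_eq_square algebra_simps)
  have "0 < (norm (B z))\<^sup>2" using False by simp
  then show ?thesis using h mult_le_cancel_left_pos by blast
qed

lemma positive_op_apply_eq_0:
  assumes B: "positive_op B" and z: "Re (cinner z (B z)) = 0"
  shows "B z = 0"
  using positive_op_norm_le[OF B Re_cinner_op_le_onorm[OF positive_op_bounded[OF B]], of z] z
  by simp

section \<open>Square roots of positive operators\<close>

text \<open>Taylor coefficients of \<open>f(t) = 1 - \<surd>(1 - t)\<close>; the recursion is \<open>f\<^sup>2 = 2f - t\<close>
  read off coefficientwise.\<close>
function sqrt_coeff :: "nat \<Rightarrow> real" where
  "sqrt_coeff n = (if n = 0 then 0 else if n = 1 then 1/2
     else (\<Sum>k\<in>{1..<n}. sqrt_coeff k * sqrt_coeff (n - k)) / 2)"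
  by auto
termination by (relation "Wellfounded.measure id") auto

declare sqrt_coeff.simps [simp del]

lemma sqrt_coeff_0 [simp]: "sqrt_coeff 0 = 0" by (simp add: sqrt_coeff.simps)
lemma sqrt_coeff_Suc_0 [simp]: "sqrt_coeff (Suc 0) = 1/2" by (simp add: sqrt_coeff.simps)

lemma sqrt_coeff_nonneg: "0 \<le> sqrt_coeff n"
proof (induction n rule: less_induct)
  case (less n)
  then show ?case
    by (subst sqrt_coeff.simps) (auto intro!: sum_nonneg divide_nonneg_pos mult_nonneg_nonneg)
qed

lemma sqrt_coeff_convolution:
  "(\<Sum>i\<le>n. sqrt_coeff i * sqrt_coeff (n - i)) = 2 * sqrt_coeff n - (if n = 1 then 1 else 0)"
proof -
  consider "n = 0" | "n = 1" | "n \<ge> 2" by linarith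
  then show ?thesis
  proof cases
    case 1 then show ?thesis by simp
  next
    case 2 then show ?thesis by (simp add: atMost_Suc)
  next
    case 3
    have "{..n} = insert 0 (insert n {1..<n})" using 3 by auto
    then have "(\<Sum>i\<le>n. sqrt_coeff i * sqrt_coeff (n - i))
        = (\<Sum>i\<in>{1..<n}. sqrt_coeff i * sqrt_coeff (n - i))"
      using 3 by simp
    also have "\<dots> = 2 * sqrt_coeff n" using 3 by (subst (2) sqrt_coeff.simps) simp
    finally show ?thesis using 3 by simp
  qed
qed

lemma sum_triangle_sqrt_coeff:
  "(\<Sum>(i,j)\<in>{(i,j). i + j < N}. sqrt_coeff i * sqrt_coeff j)
     = 2 * (\<Sum>i<N. sqrt_coeff i) - (if 1 < N then 1 else 0)"
proof -
  have "(\<Sum>(i,j)\<in>{(i,j). i + j < N}. sqrt_coeff i * sqrt_coeff j)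
      = (\<Sum>n<N. \<Sum>i\<le>n. sqrt_coeff i * sqrt_coeff (n - i))"
    by (rule sum.triangle_reindex)
  also have "\<dots> = (\<Sum>n<N. 2 * sqrt_coeff n - (if n = 1 then 1 else 0))"
    by (simp add: sqrt_coeff_convolution)
  also have "\<dots> = 2 * (\<Sum>i<N. sqrt_coeff i) - (if 1 < N then 1 else 0)"
    by (simp add: sum_subtractf sum_distrib_left sum.delta)
  finally show ?thesis .
qed

lemma sum_triangle_sqrt_coeff_le_square:
  assumes "1 \<le> N"
  shows "(\<Sum>(i,j)\<in>{(i,j). i + j < N}. sqrt_coeff i * sqrt_coeff j) \<le> (\<Sum>i<N-1. sqrt_coeff i)^2"
proof -
  let ?f = "\<lambda>(i,j). sqrt_coeff i * sqrt_coeff j"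
  let ?T = "{(i,j). i + j < N}"
  let ?Q = "{..<N-1} \<times> {..<N-1}"
  have fT: "finite ?T"
    by (rule finite_subset[of _ "{..<N} \<times> {..<N}"]) auto
  have "sum ?f ?T = sum ?f (?T \<inter> ?Q)"
  proof (rule sum.mono_neutral_right[OF fT])
    show "?T \<inter> ?Q \<subseteq> ?T" by auto
    show "\<forall>x\<in>?T - ?T \<inter> ?Q. ?f x = 0"
    proof
      fix x assume x: "x \<in> ?T - ?T \<inter> ?Q"
      obtain i j where ij: "x = (i,j)" by (cases x)
      have "i = 0 \<or> j = 0" using x ij assms by auto
      then show "?f x = 0" using ij by auto
    qed
  qed
  also have "\<dots> \<le> sum ?f ?Q"
    by (rule sum_mono2) (auto intro!: mult_nonneg_nonneg sqrt_coeff_nonneg)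
  also have "\<dots> = (\<Sum>i<N-1. sqrt_coeff i) * (\<Sum>j<N-1. sqrt_coeff j)"
    by (simp add: sum_product sum.cartesian_product)
  finally show ?thesis by (simp add: power2_eq_square)
qed

lemma sum_sqrt_coeff_le_1: "(\<Sum>i<N. sqrt_coeff i) \<le> 1"
proof (induction N rule: less_induct)
  case (less N)
  show ?case
  proof (cases "N = 0")
    case False
    have "0 \<le> (\<Sum>i<N-1. sqrt_coeff i)" and "(\<Sum>i<N-1. sqrt_coeff i) \<le> 1"
      using less False by (auto intro!: sum_nonneg sqrt_coeff_nonneg)
    then have "(\<Sum>i<N-1. sqrt_coeff i)\<^sup>2 \<le> 1" by (simp add: power_le_one)
    then have "2 * (\<Sum>i<N. sqrt_coeff i) - (if 1 < N then 1 else 0) \<le> 1"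
      using sum_triangle_sqrt_coeff_le_square[of N] False by (simp add: sum_triangle_sqrt_coeff)
    then show ?thesis by (simp split: if_splits)
  qed simp
qed

lemma sum_sqrt_coeff_outside_triangle:
  assumes "2 \<le> N"
  shows "(\<Sum>(i,j)\<in>{..<N} \<times> {..<N} - {(i,j). i + j < N}. sqrt_coeff i * sqrt_coeff j)
    = ((\<Sum>i<N. sqrt_coeff i) - 1)\<^sup>2"
proof -
  have "{(i,j). i + j < N} \<subseteq> {..<N} \<times> {..<N}" by auto
  then have "(\<Sum>(i,j)\<in>{..<N} \<times> {..<N} - {(i,j). i + j < N}. sqrt_coeff i * sqrt_coeff j)
      = (\<Sum>i<N. sqrt_coeff i) * (\<Sum>j<N. sqrt_coeff j) - (2 * (\<Sum>i<N. sqrt_coeff i) - 1)"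
    using assms by (simp add: sum_diff sum_triangle_sqrt_coeff sum_product sum.cartesian_product)
  then show ?thesis by (simp add: power2_eq_square algebra_simps)
qed

lemma summable_sqrt_coeff: "summable sqrt_coeff"
  by (rule summableI_nonneg_bounded[where x=1])
     (simp_all add: sqrt_coeff_nonneg sum_sqrt_coeff_le_1)

lemma suminf_sqrt_coeff: "(\<Sum>n. sqrt_coeff n) = 1"
proof -
  have sn: "summable (\<lambda>k. norm (sqrt_coeff k))" using summable_sqrt_coeff sqrt_coeff_nonneg by simp
  have "(\<Sum>k. sqrt_coeff k) * (\<Sum>k. sqrt_coeff k) = (\<Sum>k. \<Sum>i\<le>k. sqrt_coeff i * sqrt_coeff (k - i))"
    by (rule Cauchy_product[OF sn sn])
  also have "\<dots> = (\<Sum>k. 2 * sqrt_coeff k - (if k = 1 then 1 else 0))"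
    by (simp add: sqrt_coeff_convolution)
  also have "\<dots> = 2 * (\<Sum>k. sqrt_coeff k) - 1"
  proof -
    have s1: "(\<lambda>k. if k = 1 then 1 else (0::real)) sums 1"
      using sums_single[of 1 "\<lambda>_. 1::real"] by simp
    have "(\<lambda>k. 2 * sqrt_coeff k - (if k = 1 then 1 else 0)) sums (2 * (\<Sum>k. sqrt_coeff k) - 1)"
      by (intro sums_diff sums_mult summable_sums summable_sqrt_coeff s1)
    then show ?thesis by (rule sums_unique[symmetric])
  qed
  finally have "((\<Sum>k. sqrt_coeff k) - 1)^2 = 0" by (simp add: power2_eq_square algebra_simps)
  then show ?thesis by simp
qed

lemma sum_sqrt_coeff_tendsto: "(\<lambda>N. \<Sum>i<N. sqrt_coeff i) \<longlonglongrightarrow> 1"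
  using summable_LIMSEQ[OF summable_sqrt_coeff] suminf_sqrt_coeff by simp

instance chilbert_space \<subseteq> banach ..

locale selfadjoint_contraction =
  fixes A :: "'a::chilbert_space \<Rightarrow> 'a"
  assumes A_bounded: "bounded_op A" and A_self_adjoint: "self_adjoint A"
    and norm_A_le: "\<And>y. norm (A y) \<le> norm y"
begin

lemma bounded_op_A_pow: "bounded_op (A ^^ k)"
  using bounded_op_funpow A_bounded by blast

lemma norm_A_pow_le: "norm ((A ^^ k) y) \<le> norm y"
proof (induction k)
  case 0 then show ?case by simp
next
  case (Suc k) then show ?case using norm_A_le[of "(A ^^ k) y"] by simp
qed

lemma norm_Y_term_le: "norm (sqrt_coeff k *\<^sub>R (A ^^ k) y) \<le> sqrt_coeff k * norm y"
  using norm_A_pow_le[of k y] sqrt_coeff_nonneg[of k] by (simp add: mult_left_mono)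

lemma summable_Y_terms: "summable (\<lambda>k. sqrt_coeff k *\<^sub>R (A ^^ k) y)"
proof (rule summable_comparison_test[where g="\<lambda>k. sqrt_coeff k * norm y"])
  show "\<exists>N. \<forall>n\<ge>N. norm (sqrt_coeff n *\<^sub>R (A ^^ n) y) \<le> sqrt_coeff n * norm y"
    using norm_Y_term_le by blast
  show "summable (\<lambda>k. sqrt_coeff k * norm y)" by (intro summable_mult2 summable_sqrt_coeff)
qed

text \<open>\<open>Y = 1 - \<surd>(1 - A)\<close>, so that \<open>root = I - Y\<close> is the positive square root of \<open>I - A\<close>.\<close>
definition Y_upto :: "nat \<Rightarrow> 'a \<Rightarrow> 'a" where "Y_upto N y = (\<Sum>k<N. sqrt_coeff k *\<^sub>R (A ^^ k) y)"
definition Y :: "'a \<Rightarrow> 'a" where "Y y = (\<Sum>k. sqrt_coeff k *\<^sub>R (A ^^ k) y)"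

lemma Y_upto_tendsto: "(\<lambda>N. Y_upto N y) \<longlonglongrightarrow> Y y"
  unfolding Y_upto_def Y_def by (rule summable_LIMSEQ[OF summable_Y_terms])

lemma norm_Y_upto_le: "norm (Y_upto N u) \<le> norm u"
proof -
  have "norm (Y_upto N u) \<le> (\<Sum>k<N. norm (sqrt_coeff k *\<^sub>R (A ^^ k) u))"
    unfolding Y_upto_def by (rule norm_sum)
  also have "\<dots> \<le> (\<Sum>k<N. sqrt_coeff k * norm u)" by (intro sum_mono norm_Y_term_le)
  also have "\<dots> = (\<Sum>k<N. sqrt_coeff k) * norm u" by (simp add: sum_distrib_right)
  also have "\<dots> \<le> 1 * norm u" by (intro mult_right_mono sum_sqrt_coeff_le_1) simp
  finally show ?thesis by simp
qed

lemma norm_Y_le: "norm (Y u) \<le> norm u"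
  by (rule LIMSEQ_le_const2[OF tendsto_norm[OF Y_upto_tendsto]]) (simp add: norm_Y_upto_le)

lemma Y_upto_diff: "Y_upto N (u - v) = Y_upto N u - Y_upto N v"
  unfolding Y_upto_def
  by (simp add: bounded_op_diff[OF bounded_op_A_pow] scaleR_diff_right sum_subtractf)

lemma Y_add: "Y (u + v) = Y u + Y v"
  unfolding Y_def
  by (simp add: bounded_op_add[OF bounded_op_A_pow] scaleR_add_right
      suminf_add[OF summable_Y_terms summable_Y_terms])

lemma Y_scaleC: "Y (scaleC c u) = scaleC c (Y u)"
  unfolding Y_def
  by (simp add: bounded_linear.suminf[OF bounded_linear_scaleC summable_Y_terms]
      bounded_op_scaleC[OF bounded_op_A_pow]
      scaleC_scaleR_commute)

lemma bounded_op_Y: "bounded_op Y"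
proof -
  have "bounded_linear Y"
    by (rule bounded_linear_intro[where K=1]) (simp_all add: Y_add scaleR_scaleC Y_scaleC norm_Y_le)
  then show ?thesis by (simp add: bounded_op_def Y_scaleC)
qed

lemma Y_diff: "Y (u - v) = Y u - Y v"
  by (rule bounded_op_diff[OF bounded_op_Y])

lemma Y_upto_Y_upto_tendsto: "(\<lambda>N. Y_upto N (Y_upto N y)) \<longlonglongrightarrow> Y (Y y)"
proof (rule LIM_zero_cancel, rule Lim_null_comparison)
  let ?e = "\<lambda>N z. norm (Y_upto N z - Y z)"
  show "\<forall>\<^sub>F N in sequentially. norm (Y_upto N (Y_upto N y) - Y (Y y)) \<le> ?e N y + ?e N (Y y)"
  proof (intro always_eventually allI)
    fix N
    have "Y_upto N (Y_upto N y) - Y (Y y)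
        = Y_upto N (Y_upto N y - Y y) + (Y_upto N (Y y) - Y (Y y))"
      by (simp add: Y_upto_diff)
    then have "norm (Y_upto N (Y_upto N y) - Y (Y y))
        \<le> norm (Y_upto N (Y_upto N y - Y y)) + ?e N (Y y)"
      by (metis norm_triangle_ineq)
    also have "\<dots> \<le> ?e N y + ?e N (Y y)" by (simp add: norm_Y_upto_le)
    finally show "norm (Y_upto N (Y_upto N y) - Y (Y y)) \<le> ?e N y + ?e N (Y y)" .
  qed
  have "(\<lambda>N. Y_upto N z - Y z) \<longlonglongrightarrow> 0" for z using Y_upto_tendsto LIM_zero by blast
  then show "(\<lambda>N. ?e N y + ?e N (Y y)) \<longlonglongrightarrow> 0"
    by (simp add: tendsto_add_zero tendsto_norm_zero)
qed

lemma Y_upto_Y_upto_eq_sum: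
  "Y_upto N (Y_upto N y)
     = (\<Sum>(j,k)\<in>{..<N}\<times>{..<N}. (sqrt_coeff j * sqrt_coeff k) *\<^sub>R (A ^^ (j + k)) y)"
proof -
  have "Y_upto N (Y_upto N y)
      = (\<Sum>j<N. sqrt_coeff j *\<^sub>R (A ^^ j) (\<Sum>k<N. sqrt_coeff k *\<^sub>R (A ^^ k) y))"
    unfolding Y_upto_def ..
  also have "\<dots> = (\<Sum>j<N. \<Sum>k<N. (sqrt_coeff j * sqrt_coeff k) *\<^sub>R (A ^^ (j + k)) y)"
    by (simp add: bounded_op_sum[OF bounded_op_A_pow] bounded_op_scaleR[OF bounded_op_A_pow]
        scaleR_sum_right funpow_add)
  also have "\<dots> = (\<Sum>(j,k)\<in>{..<N}\<times>{..<N}. (sqrt_coeff j * sqrt_coeff k) *\<^sub>R (A ^^ (j + k)) y)"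
    by (simp add: sum.cartesian_product)
  finally show ?thesis .
qed

lemma two_Y_upto_minus_A_eq_sum:
  assumes N: "2 \<le> N"
  shows "2 *\<^sub>R Y_upto N y - A y
    = (\<Sum>(i,j)\<in>{(i,j). i + j < N}. (sqrt_coeff i * sqrt_coeff j) *\<^sub>R (A ^^ (i + j)) y)"
proof -
  have d: "(\<Sum>n<N. (if n = 1 then 1 else 0) *\<^sub>R (A ^^ n) y) = A y"
  proof -
    have "(\<Sum>n<N. (if n = 1 then 1 else 0) *\<^sub>R (A ^^ n) y)
        = (\<Sum>n<N. (if n = 1 then (A ^^ n) y else 0))"
      by (rule sum.cong) auto
    also have "\<dots> = A y" using N by (simp add: sum.delta)
    finally show ?thesis .
  qed
  have "2 *\<^sub>R Y_upto N y - A y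
      = (\<Sum>n<N. (2 * sqrt_coeff n) *\<^sub>R (A ^^ n) y) - (\<Sum>n<N. (if n = 1 then 1 else 0) *\<^sub>R (A ^^ n) y)"
    unfolding Y_upto_def d by (simp add: scaleR_sum_right)
  also have "\<dots> = (\<Sum>n<N. (2 * sqrt_coeff n - (if n = 1 then 1 else 0)) *\<^sub>R (A ^^ n) y)"
    by (simp add: scaleR_diff_left sum_subtractf)
  also have "\<dots> = (\<Sum>n<N. (\<Sum>i\<le>n. sqrt_coeff i * sqrt_coeff (n - i)) *\<^sub>R (A ^^ n) y)"
    by (simp add: sqrt_coeff_convolution)
  also have "\<dots> = (\<Sum>n<N. \<Sum>i\<le>n. (sqrt_coeff i * sqrt_coeff (n - i)) *\<^sub>R (A ^^ (i + (n - i))) y)"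
    by (auto simp: scaleR_sum_left intro!: sum.cong)
  also have "\<dots> = (\<Sum>(i,j)\<in>{(i,j). i + j < N}. (sqrt_coeff i * sqrt_coeff j) *\<^sub>R (A ^^ (i + j)) y)"
    by (rule sum.triangle_reindex[symmetric])
  finally show ?thesis .
qed

lemma Y_upto_square_defect_eq:
  assumes N: "2 \<le> N"
  shows "2 *\<^sub>R Y_upto N y - A y - Y_upto N (Y_upto N y)
    = - (\<Sum>(i,j)\<in>{..<N} \<times> {..<N} - {(i,j). i + j < N}.
           (sqrt_coeff i * sqrt_coeff j) *\<^sub>R (A ^^ (i + j)) y)"
proof -
  have "{(i,j). i + j < N} \<subseteq> {..<N} \<times> {..<N}" by auto
  from sum.subset_diff[OF this, of "\<lambda>(i,j). (sqrt_coeff i * sqrt_coeff j) *\<^sub>R (A ^^ (i + j)) y"]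
  show ?thesis by (simp add: two_Y_upto_minus_A_eq_sum[OF N] Y_upto_Y_upto_eq_sum)
qed

lemma norm_Y_upto_square_defect_le:
  assumes N: "2 \<le> N"
  shows "norm (2 *\<^sub>R Y_upto N y - A y - Y_upto N (Y_upto N y))
    \<le> ((\<Sum>i<N. sqrt_coeff i) - 1)\<^sup>2 * norm y"
proof -
  let ?D = "{..<N} \<times> {..<N} - {(i,j). i + j < N}"
  have "norm (2 *\<^sub>R Y_upto N y - A y - Y_upto N (Y_upto N y))
      \<le> (\<Sum>(i,j)\<in>?D. norm ((sqrt_coeff i * sqrt_coeff j) *\<^sub>R (A ^^ (i + j)) y))"
    unfolding Y_upto_square_defect_eq[OF N] norm_minus_cancel by (rule norm_sum[THEN order_trans])
       (simp add: case_prod_unfold)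
  also have "\<dots> \<le> (\<Sum>(i,j)\<in>?D. sqrt_coeff i * sqrt_coeff j * norm y)"
    using norm_A_pow_le sqrt_coeff_nonneg by (intro sum_mono) (auto intro!: mult_left_mono)
  also have "\<dots> = ((\<Sum>i<N. sqrt_coeff i) - 1)\<^sup>2 * norm y"
    using sum_sqrt_coeff_outside_triangle[OF N]
    by (simp add: sum_distrib_right[symmetric] case_prod_unfold)
  finally show ?thesis .
qed

lemma Y_Y: "Y (Y y) = 2 *\<^sub>R Y y - A y"
proof -
  let ?E = "\<lambda>N. 2 *\<^sub>R Y_upto N y - A y - Y_upto N (Y_upto N y)"
  have l1: "?E \<longlonglongrightarrow> 2 *\<^sub>R Y y - A y - Y (Y y)"
    by (intro tendsto_intros Y_upto_tendsto Y_upto_Y_upto_tendsto)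
  have l2: "?E \<longlonglongrightarrow> 0"
  proof (rule Lim_null_comparison)
    show "\<forall>\<^sub>F N in sequentially. norm (?E N) \<le> ((\<Sum>i<N. sqrt_coeff i) - 1)^2 * norm y"
      using norm_Y_upto_square_defect_le eventually_sequentially by blast
    have "(\<lambda>N. ((\<Sum>i<N. sqrt_coeff i) - 1)^2 * norm y) \<longlonglongrightarrow> (1 - 1)^2 * norm y"
      by (intro tendsto_intros sum_sqrt_coeff_tendsto)
    then show "(\<lambda>N. ((\<Sum>i<N. sqrt_coeff i) - 1)^2 * norm y) \<longlonglongrightarrow> 0" by simp
  qed
  have "2 *\<^sub>R Y y - A y - Y (Y y) = 0" using LIMSEQ_unique[OF l1 l2] .
  then show ?thesis by (simp add: right_minus_eq)
qed

lemma cinner_Y_real_le: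
  shows "Im (cinner y (Y y)) = 0" and "Re (cinner y (Y y)) \<le> (norm y)^2"
proof -
  let ?f = "\<lambda>k. cinner y (sqrt_coeff k *\<^sub>R (A ^^ k) y)"
  have sf: "summable ?f"
    by (rule bounded_linear.summable[OF bounded_linear_cinner_right summable_Y_terms])
  have e: "cinner y (Y y) = (\<Sum>k. ?f k)"
    unfolding Y_def by (rule bounded_linear.suminf[OF bounded_linear_cinner_right summable_Y_terms])
  have imz: "Im (?f k) = 0" for k
    using self_adjoint_Im[OF self_adjoint_funpow[OF A_self_adjoint, of k], of y]
    by (simp add: cinner_scaleR_right)
  show "Im (cinner y (Y y)) = 0" unfolding e Im_suminf[OF sf] imz by simp
  have rb: "Re (?f k) \<le> sqrt_coeff k * (norm y)^2" for k
  proof -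
    have "Re (cinner y ((A ^^ k) y)) \<le> cmod (cinner y ((A ^^ k) y))" by (rule complex_Re_le_cmod)
    also have "\<dots> \<le> norm y * norm ((A ^^ k) y)" by (rule norm_cinner_le)
    also have "\<dots> \<le> norm y * norm y" using norm_A_pow_le[of k y] by (simp add: mult_left_mono)
    finally have "Re (cinner y ((A ^^ k) y)) \<le> (norm y)^2" by (simp add: power2_eq_square)
    then show ?thesis
      using sqrt_coeff_nonneg[of k] by (simp add: cinner_scaleR_right mult_left_mono)
  qed
  have "Re (cinner y (Y y)) = (\<Sum>k. Re (?f k))" unfolding e by (rule Re_suminf[OF sf])
  also have "\<dots> \<le> (\<Sum>k. sqrt_coeff k * (norm y)^2)"
    by (rule suminf_le[OF rb bounded_linear.summable[OF bounded_linear_Re sf]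
          summable_mult2[OF summable_sqrt_coeff]])
  also have "\<dots> = (norm y)^2"
    using suminf_mult2[OF summable_sqrt_coeff, of "(norm y)^2"] suminf_sqrt_coeff by simp
  finally show "Re (cinner y (Y y)) \<le> (norm y)^2" .
qed

lemma Y_commute:
  assumes B: "bounded_op B" and c: "\<And>u. B (A u) = A (B u)"
  shows "B (Y y) = Y (B y)"
proof -
  have Bk: "B ((A ^^ k) u) = (A ^^ k) (B u)" for k u
    by (induction k) (simp_all add: c)
  have "B (Y y) = (\<Sum>k. B (sqrt_coeff k *\<^sub>R (A ^^ k) y))"
    unfolding Y_def by (rule bounded_linear.suminf[OF bounded_op_linear[OF B] summable_Y_terms])
  also have "\<dots> = Y (B y)" unfolding Y_def by (simp add: bounded_op_scaleR[OF B] Bk)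
  finally show ?thesis .
qed

definition root :: "'a \<Rightarrow> 'a" where "root y = y - Y y"

lemma positive_op_root: "positive_op root"
proof -
  have "root = (\<lambda>y. y - Y y)" by (rule ext) (simp add: root_def)
  then have b: "bounded_op root" using bounded_op_minus[OF bounded_op_ident bounded_op_Y] by simp
  have "0 \<le> cinner y (root y)" for y
  proof -
    have e: "cinner y (root y) = complex_of_real ((norm y)^2) - cinner y (Y y)"
      by (simp add: root_def cinner_diff_right cinner_self_eq_norm)
    show ?thesis unfolding e less_eq_complex_def using cinner_Y_real_le[of y] by simp
  qed
  then show ?thesis using b by (simp add: positive_op_def)
qed

lemma root_root: "root (root y) = y - A y"
  by (simp add: root_def Y_diff Y_Y scaleR_2 algebra_simps)

lemma root_commute: "bounded_op B \<Longrightarrow> (\<And>u. B (A u) = A (B u)) \<Longrightarrow> B (root y) = root (B y)"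
  by (simp add: root_def bounded_op_diff Y_commute)

end

text \<open>With \<open>D = R - S\<close>, \<open>(R + S) D = R\<^sup>2 - S\<^sup>2 = 0\<close> by commutativity, so \<open>D\<^sup>2 y\<close> lies
  in the kernel of the positive operator \<open>R + S\<close>, hence in the kernels of \<open>R\<close> and \<open>S\<close>;
  then \<open>\<parallel>D y\<parallel>\<^sup>2 = \<langle>y, D\<^sup>2 y\<rangle> = 0\<close>.\<close>
lemma commuting_positive_sqrt_unique:
  assumes R: "positive_op R" and S: "positive_op S" and sq: "\<And>y. R (R y) = S (S y)"
    and comm: "\<And>y. S (R y) = R (S y)"
  shows "R y = S y"
proof -
  define D where "D = (\<lambda>y. R y - S y)"
  have bR: "bounded_op R" and bS: "bounded_op S" using R S by (simp_all add: positive_op_bounded)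
  have DD: "D (D y) = 0" for y
  proof -
    define z where "z = D y"
    have "R z + S z = R (R y) - R (S y) + (S (R y) - S (S y))"
      unfolding z_def D_def by (simp add: bounded_op_diff[OF bR] bounded_op_diff[OF bS])
    also have "\<dots> = 0" using sq[of y] comm[of y] by simp
    finally have "Re (cinner z (R z)) + Re (cinner z (S z)) = 0"
      by (metis cinner_add_right cinner_zero_right plus_complex.sel(1) zero_complex.sel(1))
    then have "Re (cinner z (R z)) = 0" and "Re (cinner z (S z)) = 0"
      using positive_op_Re_nonneg[OF R, of z] positive_op_Re_nonneg[OF S, of z] by linarith+
    then have "R z = 0" and "S z = 0" using positive_op_apply_eq_0 R S by blast+
    then show "D (D y) = 0" unfolding z_def D_def by simp
  qed
  have "self_adjoint D"
    unfolding D_def by (intro self_adjoint_minus positive_op_self_adjoint R S)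
  then have "cinner y (D (D y)) = cinner (D y) (D y)" by (simp add: self_adjoint_def)
  then have "norm (D y) = 0" using DD by (simp add: cinner_self_eq_norm)
  then show ?thesis unfolding D_def by simp
qed

lemma selfadjoint_contraction_ident_minus_scaled:
  fixes T :: "'a::chilbert_space \<Rightarrow> 'a"
  assumes T: "positive_op T" and K: "onorm T \<le> K" "0 < K"
  shows "selfadjoint_contraction (\<lambda>y. y - (1/K) *\<^sub>R T y)"
proof
  let ?A = "\<lambda>y. y - (1/K) *\<^sub>R T y"
  have bT: "bounded_op T" using T by (rule positive_op_bounded)
  show bA: "bounded_op ?A" by (intro bounded_op_minus bounded_op_ident bounded_op_scaleR_left bT)
  show "self_adjoint ?A"
    using positive_op_self_adjoint[OF T]
    by (simp add: self_adjoint_def cinner_diff_left cinner_diff_right cinner_scaleR_left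
        cinner_scaleR_right)
  have form: "cinner y (?A y) = of_real ((norm y)\<^sup>2 - Re (cinner y (T y)) / K)" for y
    using positive_op_cinner_real[OF T, of y]
    by (simp add: cinner_diff_right cinner_scaleR_right cinner_self_eq_norm)
  have "Re (cinner y (T y)) \<le> K * (norm y)\<^sup>2" for y
  proof -
    have "onorm T * (norm y)\<^sup>2 \<le> K * (norm y)\<^sup>2" using K(1) by (simp add: mult_right_mono)
    then show ?thesis using Re_cinner_op_le_onorm[OF bT, of y] by linarith
  qed
  then have "0 \<le> (norm y)\<^sup>2 - Re (cinner y (T y)) / K" for y
    using K(2) by (simp add: field_simps)
  then have pA: "positive_op ?A"
    using bA form by (simp add: positive_op_def less_eq_complex_def)
  have up: "Re (cinner y (?A y)) \<le> 1 * (norm y)\<^sup>2" for y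
    using form[of y] positive_op_Re_nonneg[OF T, of y] K(2) by simp
  show "norm (?A y) \<le> norm y" for y
  proof -
    have "(norm (?A y))\<^sup>2 \<le> 1 * Re (cinner y (?A y))" by (rule positive_op_norm_le[OF pA up])
    also have "\<dots> \<le> (norm y)\<^sup>2" using up[of y] by simp
    finally show ?thesis by (rule power2_le_imp_le) simp
  qed
qed

text \<open>The square root \<open>\<surd>K \<cdot> \<surd>(I - (I - T/K))\<close> commutes with every bounded operator commuting
  with \<open>T\<close>, since it is a norm limit of polynomials in \<open>T\<close>.\<close>
lemma positive_op_sqrt_exists:
  fixes T :: "'a::chilbert_space \<Rightarrow> 'a"
  assumes T: "positive_op T"
  obtains R where "positive_op R" and "\<And>y. R (R y) = T y"
    and "\<And>B y. bounded_op B \<Longrightarrow> (\<And>u. B (T u) = T (B u)) \<Longrightarrow> B (R y) = R (B y)"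
proof -
  have bT: "bounded_op T" using T by (rule positive_op_bounded)
  define K where "K = onorm T + 1"
  have K: "onorm T \<le> K" "0 < K"
    unfolding K_def using onorm_pos_le[OF bounded_op_linear[OF bT]] by simp_all
  define A where "A = (\<lambda>y. y - (1/K) *\<^sub>R T y)"
  interpret selfadjoint_contraction A
    using selfadjoint_contraction_ident_minus_scaled[OF T K] by (simp only: A_def)
  define R where "R = (\<lambda>y. sqrt K *\<^sub>R root y)"
  have "positive_op R"
    using positive_op_root K(2)
    by (simp add: R_def positive_op_def bounded_op_scaleR_left cinner_scaleR_right
        less_eq_complex_def)
  moreover have "R (R y) = T y" for y
  proof -
    have "R (R y) = (sqrt K * sqrt K) *\<^sub>R root (root y)"
      by (simp add: R_def bounded_op_scaleR[OF positive_op_bounded[OF positive_op_root]])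
    also have "\<dots> = K *\<^sub>R (y - A y)" using K(2) by (simp add: root_root)
    finally show ?thesis using K(2) by (simp add: A_def)
  qed
  moreover have "B (R y) = R (B y)" if B: "bounded_op B" and BT: "\<And>u. B (T u) = T (B u)" for B y
  proof -
    have "B (A u) = A (B u)" for u
      unfolding A_def by (simp add: bounded_op_diff[OF B] bounded_op_scaleR[OF B] BT)
    then show ?thesis by (simp add: R_def bounded_op_scaleR[OF B] root_commute[OF B])
  qed
  ultimately show ?thesis using that by blast
qed

lemma ex1_positive_op_sqrt:
  fixes T :: "'a::chilbert_space \<Rightarrow> 'a"
  assumes T: "positive_op T"
  shows "\<exists>!S. positive_op S \<and> S \<circ> S = T"
proof -
  obtain R where R: "positive_op R" and RR: "\<And>y. R (R y) = T y"
    and comm: "\<And>B y. bounded_op B \<Longrightarrow> (\<And>u. B (T u) = T (B u)) \<Longrightarrow> B (R y) = R (B y)"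
    using positive_op_sqrt_exists[OF T] by blast
  show ?thesis
  proof (rule ex1I[of _ R])
    show "positive_op R \<and> R \<circ> R = T" using R RR by (auto simp: comp_def)
  next
    fix S assume "positive_op S \<and> S \<circ> S = T"
    then have S: "positive_op S" and SS: "\<And>y. S (S y) = T y"
      by (auto simp: comp_def dest: fun_cong)
    have "S (T u) = T (S u)" for u using SS by metis
    then have SR: "S (R y) = R (S y)" for y by (rule comm[OF positive_op_bounded[OF S]])
    have "R y = S y" for y by (rule commuting_positive_sqrt_unique[OF R S]) (simp_all add: RR SS SR)
    then show "S = R" by auto
  qed
qed

lemma
  fixes T :: "'a::chilbert_space \<Rightarrow> 'a"
  assumes "positive_op T"
  shows positive_op_op_sqrt: "positive_op (op_sqrt T)"
    and op_sqrt_op_sqrt: "op_sqrt T (op_sqrt T y) = T y"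
proof -
  have "positive_op (op_sqrt T) \<and> op_sqrt T \<circ> op_sqrt T = T"
    unfolding op_sqrt_def by (rule theI'[OF ex1_positive_op_sqrt[OF assms]])
  then show "positive_op (op_sqrt T)" and "op_sqrt T (op_sqrt T y) = T y"
    by (auto simp: comp_def dest: fun_cong)
qed

section \<open>Strong convergence of decreasing positive operators\<close>

lemma positive_op_diff_norm_le:
  assumes S: "positive_op S" and T: "positive_op T"
    and TS: "\<And>z. Re (cinner z (T z)) \<le> Re (cinner z (S z))"
    and SK: "\<And>z. Re (cinner z (S z)) \<le> K * (norm z)\<^sup>2"
  shows "(norm (S y - T y))\<^sup>2 \<le> K * (Re (cinner y (S y)) - Re (cinner y (T y)))"
proof -
  define B where "B = (\<lambda>z. S z - T z)"
  have form: "cinner z (B z) = of_real (Re (cinner z (S z)) - Re (cinner z (T z)))" for z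
    unfolding B_def using positive_op_Im[OF S, of z] positive_op_Im[OF T, of z]
    by (simp add: cinner_diff_right complex_eq_iff)
  have "positive_op B"
    using bounded_op_minus[OF positive_op_bounded[OF S] positive_op_bounded[OF T]] form TS
    by (simp add: B_def positive_op_def less_eq_complex_def)
  moreover have "Re (cinner z (B z)) \<le> K * (norm z)\<^sup>2" for z
    using form[of z] SK[of z] positive_op_Re_nonneg[OF T, of z] by simp
  ultimately have "(norm (B y))\<^sup>2 \<le> K * Re (cinner y (B y))" by (rule positive_op_norm_le)
  then show ?thesis using form[of y] by (simp add: B_def)
qed

lemma Cauchy_if_norm_diff_le_decseq:
  fixes f :: "nat \<Rightarrow> 'a::real_normed_vector" and a :: "nat \<Rightarrow> real"
  assumes dec: "decseq a" and conv: "convergent a" and K: "0 \<le> K"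
    and le: "\<And>m n. m \<le> n \<Longrightarrow> (norm (f m - f n))\<^sup>2 \<le> K * (a m - a n)"
  shows "Cauchy f"
proof (rule CauchyI)
  fix e :: real assume e: "0 < e"
  have sym: "(norm (f m - f n))\<^sup>2 \<le> (K + 1) * \<bar>a m - a n\<bar>" for m n
  proof -
    have "(norm (f m - f n))\<^sup>2 \<le> K * \<bar>a m - a n\<bar>"
    proof (cases "m \<le> n")
      case True
      then have "a n \<le> a m" using dec by (simp add: decseq_def)
      then show ?thesis using le[OF True] by simp
    next
      case False
      then have "a m \<le> a n" using dec by (simp add: decseq_def)
      then show ?thesis using le[of n m] False by (simp add: norm_minus_commute)
    qed
    also have "\<dots> \<le> (K + 1) * \<bar>a m - a n\<bar>" by (simp add: mult_right_mono)
    finally show ?thesis .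
  qed
  obtain M where M: "\<And>m n. M \<le> m \<Longrightarrow> M \<le> n \<Longrightarrow> norm (a m - a n) < e\<^sup>2 / (K + 1)"
    using CauchyD[OF convergent_Cauchy[OF conv], of "e\<^sup>2 / (K + 1)"] e K by auto
  show "\<exists>M. \<forall>m\<ge>M. \<forall>n\<ge>M. norm (f m - f n) < e"
  proof (intro exI allI impI)
    fix m n assume "M \<le> m" "M \<le> n"
    have "(norm (f m - f n))\<^sup>2 \<le> (K + 1) * \<bar>a m - a n\<bar>" by (rule sym)
    also have "\<dots> < (K + 1) * (e\<^sup>2 / (K + 1))"
      using M[OF \<open>M \<le> m\<close> \<open>M \<le> n\<close>] K by (intro mult_strict_left_mono) simp_all
    also have "\<dots> = e\<^sup>2" using K by simp
    finally show "norm (f m - f n) < e" using e by (simp add: power_less_imp_less_base)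
  qed
qed

lemma decreasing_positive_ops_convergent:
  fixes R :: "nat \<Rightarrow> 'a::chilbert_space \<Rightarrow> 'a"
  assumes pos: "\<And>n. positive_op (R n)"
    and dec: "\<And>n y. Re (cinner y (R (Suc n) y)) \<le> Re (cinner y (R n y))"
  shows "convergent (\<lambda>n. R n y)"
proof -
  define a where "a = (\<lambda>z n. Re (cinner z (R n z)))"
  have ds: "decseq (a z)" for z unfolding a_def by (rule decseq_SucI) (rule dec)
  have "\<forall>n. 0 \<le> a y n" unfolding a_def using positive_op_Re_nonneg[OF pos] by blast
  then have "convergent (a y)"
    using decseq_convergent[OF ds] unfolding convergent_def by blast
  moreover have "(norm (R m y - R n y))\<^sup>2 \<le> onorm (R 0) * (a y m - a y n)" if "m \<le> n" for m n
  proof (unfold a_def, rule positive_op_diff_norm_le[OF pos pos])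
    show "Re (cinner z (R n z)) \<le> Re (cinner z (R m z))" for z
      using ds[of z] that unfolding a_def decseq_def by blast
    show "Re (cinner z (R m z)) \<le> onorm (R 0) * (norm z)\<^sup>2" for z
      using ds[of z] Re_cinner_op_le_onorm[OF positive_op_bounded[OF pos], of z 0]
      unfolding a_def decseq_def by (meson order_trans zero_le)
  qed
  moreover have "0 \<le> onorm (R 0)"
    using onorm_pos_le[OF bounded_op_linear[OF positive_op_bounded[OF pos]]] .
  ultimately have "Cauchy (\<lambda>n. R n y)" by (intro Cauchy_if_norm_diff_le_decseq[OF ds])
  then show ?thesis by (simp add: Cauchy_convergent_iff)
qed

section \<open>The energy tree\<close>

lemma orth_proj_positive_op:
  assumes Q: "orth_proj Q"
  shows "positive_op Q"
proof -
  have b: "bounded_op Q" and QQ: "Q (Q z) = Q z" and sa: "cinner (Q u) v = cinner u (Q v)" for z u v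
    using Q unfolding orth_proj_def by (auto dest: fun_cong)
  have "cinner z (Q z) = cinner (Q z) (Q z)" for z by (simp add: sa QQ)
  then have "0 \<le> cinner z (Q z)" for z by (simp add: cinner_ge_zero)
  then show ?thesis using b by (simp add: positive_op_def)
qed

lemma orth_proj_complement:
  assumes Q: "orth_proj Q"
  shows "orth_proj (\<lambda>y. y - Q y)"
proof -
  have b: "bounded_op Q" and QQ: "Q (Q z) = Q z" and sa: "cinner (Q u) v = cinner u (Q v)" for z u v
    using Q unfolding orth_proj_def by (auto dest: fun_cong)
  have "(\<lambda>y. y - Q y) \<circ> (\<lambda>y. y - Q y) = (\<lambda>y. y - Q y)"
    by (rule ext) (simp add: bounded_op_diff[OF b] QQ)
  moreover have "cinner (u - Q u) v = cinner u (v - Q v)" for u v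
    by (simp add: cinner_diff_left cinner_diff_right sa)
  ultimately show ?thesis
    unfolding orth_proj_def using bounded_op_minus[OF bounded_op_ident b] by blast
qed

lemma positive_op_sandwich:
  assumes S: "positive_op S" and Q: "positive_op Q"
  shows "positive_op (S \<circ> Q \<circ> S)"
proof -
  have "cinner y ((S \<circ> Q \<circ> S) y) = cinner (S y) (Q (S y))" for y
    using positive_op_self_adjoint[OF S] by (simp add: self_adjoint_def)
  moreover have "bounded_op (S \<circ> Q \<circ> S)"
    by (intro bounded_op_comp positive_op_bounded S Q)
  ultimately show ?thesis using positive_op_nonneg[OF Q] by (simp add: positive_op_def)
qed

lemma R_word_Nil [simp]: "R_word P R0 [] = R0"
  by (simp add: R_word_def)

lemma R_word_snoc:
  "R_word P R0 (w @ [j]) = op_sqrt (R_word P R0 w) \<circ> (\<lambda>y. y - P j y) \<circ> op_sqrt (R_word P R0 w)"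
  by (simp add: R_word_def)

lemma D_word_snoc: "D_word P R0 (w @ [j]) = op_sqrt (R_word P R0 w) \<circ> P j \<circ> op_sqrt (R_word P R0 w)"
  by (simp add: D_word_def)

locale energy_tree =
  fixes m :: nat and P :: "nat \<Rightarrow> 'a::chilbert_space \<Rightarrow> 'a" and R0 :: "'a \<Rightarrow> 'a"
  assumes orth_proj_P: "\<And>j. j \<in> {1..m} \<Longrightarrow> orth_proj (P j)"
    and positive_op_R0: "positive_op R0"
begin

lemma positive_op_R_word: "set w \<subseteq> {1..m} \<Longrightarrow> positive_op (R_word P R0 w)"
proof (induction w rule: rev_induct)
  case (snoc j w)
  then have w: "positive_op (R_word P R0 w)" and j: "j \<in> {1..m}" by auto
  show ?case
    unfolding R_word_snoc
    by (rule positive_op_sandwich[OF positive_op_op_sqrt[OF w]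
          orth_proj_positive_op[OF orth_proj_complement[OF orth_proj_P[OF j]]]])
qed (simp add: positive_op_R0)

lemma positive_op_D_word_snoc:
  "set w \<subseteq> {1..m} \<Longrightarrow> j \<in> {1..m} \<Longrightarrow> positive_op (D_word P R0 (w @ [j]))"
  unfolding D_word_snoc
  by (rule positive_op_sandwich[OF positive_op_op_sqrt[OF positive_op_R_word]
        orth_proj_positive_op[OF orth_proj_P]])

lemma R_word_eq_R_word_snoc_plus_D_word:
  assumes "set w \<subseteq> {1..m}"
  shows "R_word P R0 w y = R_word P R0 (w @ [j]) y + D_word P R0 (w @ [j]) y"
proof -
  define S where "S = op_sqrt (R_word P R0 w)"
  have S: "bounded_op S"
    unfolding S_def by (intro positive_op_bounded positive_op_op_sqrt positive_op_R_word assms)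
  have "R_word P R0 (w @ [j]) y + D_word P R0 (w @ [j]) y = S (S y - P j (S y) + P j (S y))"
    unfolding R_word_snoc D_word_snoc S_def[symmetric]
    by (simp add: bounded_op_add[OF S, symmetric])
  also have "\<dots> = R_word P R0 w y"
    by (simp add: S_def op_sqrt_op_sqrt[OF positive_op_R_word[OF assms]])
  finally show ?thesis by simp
qed

end

lemma prefix_0 [simp]: "prefix \<omega> 0 = []"
  by (simp add: prefix_def)

lemma prefix_Suc: "prefix \<omega> (Suc n) = prefix \<omega> n @ [\<omega> n]"
  by (simp add: prefix_def)

lemma Delta_Suc: "Delta P R0 (Suc n) \<omega> = D_word P R0 (prefix \<omega> n @ [\<omega> n])"
  by (simp add: Delta_def prefix_Suc)

lemma space_path_space: "space (path_space m) = {\<omega>. \<forall>i. \<omega> i \<in> {1..m}}"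
  by (auto simp: path_space_def space_PiM PiE_iff)

lemma set_prefix_subset: "\<omega> \<in> space (path_space m) \<Longrightarrow> set (prefix \<omega> n) \<subseteq> {1..m}"
  by (auto simp: space_path_space prefix_def)

lemma measurable_prefix: "(\<lambda>\<omega>. prefix \<omega> n) \<in> measurable (path_space m) (count_space UNIV)"
proof (induction n)
  case (Suc n)
  have "(\<lambda>\<omega>. \<omega> n) \<in> measurable (path_space m) (count_space {1..m})"
    unfolding path_space_def by (rule measurable_component_singleton) simp
  then have "(\<lambda>\<omega>. \<omega> n) \<in> measurable (path_space m) (count_space UNIV)"
    by (rule measurable_compose) simp
  then have "(\<lambda>\<omega>. (prefix \<omega> n, \<omega> n))
      \<in> measurable (path_space m) (count_space UNIV \<Otimes>\<^sub>M count_space UNIV)"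
    by (rule measurable_Pair[OF Suc.IH])
  then have "(\<lambda>\<omega>. (prefix \<omega> n, \<omega> n)) \<in> measurable (path_space m) (count_space UNIV)"
    using pair_measure_countable[of "UNIV::nat list set" "UNIV::nat set"] by simp
  from measurable_compose[OF this, of "\<lambda>(w, j). w @ [j]"] show ?case
    by (simp add: prefix_Suc)
qed simp

lemma borel_measurable_prefix_fun:
  fixes F :: "nat list \<Rightarrow> 'b::topological_space"
  assumes "sets M = sets (path_space m)"
  shows "(\<lambda>\<omega>. F (prefix \<omega> n)) \<in> borel_measurable M"
  using measurable_compose[OF measurable_prefix borel_measurable_count_space]
  by (simp add: measurable_cong_sets[OF assms refl])

context energy_tree
begin

lemma R_word_prefix_split:
  assumes "\<omega> \<in> space (path_space m)"
  shows "R_word P R0 (prefix \<omega> n) y = R_word P R0 (prefix \<omega> (Suc n)) y + Delta P R0 (Suc n) \<omega> y"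
  unfolding Delta_Suc prefix_Suc
  by (rule R_word_eq_R_word_snoc_plus_D_word[OF set_prefix_subset[OF assms]])

lemma positive_op_R_word_prefix:
  "\<omega> \<in> space (path_space m) \<Longrightarrow> positive_op (R_word P R0 (prefix \<omega> n))"
  by (rule positive_op_R_word[OF set_prefix_subset])

lemma positive_op_Delta_Suc:
  assumes "\<omega> \<in> space (path_space m)"
  shows "positive_op (Delta P R0 (Suc n) \<omega>)"
  using assms unfolding Delta_Suc
  by (intro positive_op_D_word_snoc set_prefix_subset) (auto simp: space_path_space)

lemma R_word_prefix_tendsto_R_inf:
  assumes \<omega>: "\<omega> \<in> space (path_space m)"
  shows "(\<lambda>n. R_word P R0 (prefix \<omega> n) y) \<longlonglongrightarrow> R_inf P R0 \<omega> y"
proof -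
  have "convergent (\<lambda>n. R_word P R0 (prefix \<omega> n) y)"
  proof (rule decreasing_positive_ops_convergent)
    show "positive_op (R_word P R0 (prefix \<omega> n))" for n by (rule positive_op_R_word_prefix[OF \<omega>])
    show "Re (cinner z (R_word P R0 (prefix \<omega> (Suc n)) z))
        \<le> Re (cinner z (R_word P R0 (prefix \<omega> n) z))" for n z
      using positive_op_Re_nonneg[OF positive_op_Delta_Suc[OF \<omega>, of n], of z]
      by (simp add: R_word_prefix_split[OF \<omega>, of n z] cinner_add_right)
  qed
  then show ?thesis by (simp add: R_inf_def convergent_LIMSEQ_iff)
qed

end

section \<open>Integrating the energy balance\<close>

lemma (in prob_space) integral_telescoping_sums:
  fixes r d :: "nat \<Rightarrow> 'a \<Rightarrow> complex" and r_lim :: "'a \<Rightarrow> complex"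
  assumes meas: "\<And>n. r n \<in> borel_measurable M" "\<And>n. d n \<in> borel_measurable M"
    and r_0: "\<And>\<omega>. \<omega> \<in> space M \<Longrightarrow> r 0 \<omega> = c"
    and step: "\<And>n \<omega>. \<omega> \<in> space M \<Longrightarrow> r n \<omega> = r (Suc n) \<omega> + d n \<omega>"
    and nonneg: "\<And>n \<omega>. \<omega> \<in> space M \<Longrightarrow> 0 \<le> r n \<omega> \<and> 0 \<le> d n \<omega>"
    and lim: "\<And>\<omega>. \<omega> \<in> space M \<Longrightarrow> (\<lambda>n. r n \<omega>) \<longlonglongrightarrow> r_lim \<omega>"
  shows "integrable M (d n)" and "integrable M r_lim"
    and "(\<lambda>n. integral\<^sup>L M (d n)) sums (c - integral\<^sup>L M r_lim)"
proof -
  have r_Suc: "r (Suc n) \<omega> = r n \<omega> - d n \<omega>" if "\<omega> \<in> space M" for n \<omega>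
    using step[OF that, of n] by simp
  have r_sum: "r n \<omega> = c - (\<Sum>k<n. d k \<omega>)" if "\<omega> \<in> space M" for n \<omega>
    by (induction n) (simp_all add: r_0[OF that] r_Suc[OF that])
  have bounds: "norm (r n \<omega>) \<le> Re c \<and> norm (d n \<omega>) \<le> Re c" if "\<omega> \<in> space M" for n \<omega>
  proof -
    have "0 \<le> (\<Sum>k<n. d k \<omega>)" using nonneg[OF that] by (simp add: sum_nonneg)
    then have "r n \<omega> \<le> c" by (simp add: r_sum[OF that])
    moreover have "d n \<omega> \<le> r n \<omega>"
      using r_Suc[OF that, of n] nonneg[OF that, of "Suc n"] by simp
    ultimately show ?thesis
      using nonneg[OF that, of n] by (auto simp: less_eq_complex_def cmod_eq_Re)
  qed
  have r_lim_meas: "r_lim \<in> borel_measurable M"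
    by (rule borel_measurable_LIMSEQ_metric[OF meas(1) lim])
  have d_int: "integrable M (d k)" for k
    by (rule integrable_const_bound[where B="Re c"]) (auto simp: bounds meas)
  then show "integrable M (d n)" .
  show "integrable M r_lim"
    by (rule integrable_dominated_convergence[where s=r and w="\<lambda>_. Re c"])
       (auto simp: r_lim_meas meas lim bounds)
  have "(\<lambda>n. integral\<^sup>L M (r n)) \<longlonglongrightarrow> integral\<^sup>L M r_lim"
    by (rule integral_dominated_convergence[where w="\<lambda>_. Re c"])
       (auto simp: r_lim_meas meas lim bounds)
  moreover have "integral\<^sup>L M (r n) = c - (\<Sum>k<n. integral\<^sup>L M (d k))" for n
  proof -
    have "integral\<^sup>L M (r n) = integral\<^sup>L M (\<lambda>\<omega>. c - (\<Sum>k<n. d k \<omega>))"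
      by (rule Bochner_Integration.integral_cong) (simp_all add: r_sum)
    also have "\<dots> = c - (\<Sum>k<n. integral\<^sup>L M (d k))"
      using d_int by (simp add: prob_space)
    finally show ?thesis .
  qed
  ultimately have "(\<lambda>n. c - (\<Sum>k<n. integral\<^sup>L M (d k))) \<longlonglongrightarrow> integral\<^sup>L M r_lim" by simp
  then have "(\<lambda>n. c - (c - (\<Sum>k<n. integral\<^sup>L M (d k)))) \<longlonglongrightarrow> c - integral\<^sup>L M r_lim"
    by (intro tendsto_diff tendsto_const)
  then show "(\<lambda>n. integral\<^sup>L M (d n)) sums (c - integral\<^sup>L M r_lim)"
    by (simp add: sums_def)
qed

theorem proposition4p4:
  fixes m :: nat
    and P :: "nat \<Rightarrow> 'a::chilbert_space \<Rightarrow> 'a"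
    and R0 :: "'a \<Rightarrow> 'a"
    and q :: "nat \<Rightarrow> real"
    and x :: 'a
    and \<nu> :: "(nat \<Rightarrow> nat) measure"
  assumes "m \<ge> 2"
    and "\<And>j. j \<in> {1..m} \<Longrightarrow> orth_proj (P j)"
    and "positive_op R0"
    and "\<And>j. j \<in> {1..m} \<Longrightarrow> q j \<ge> 0"
    and "(\<Sum>j\<in>{1..m}. q j) = 1"
    and "is_path_measure m P R0 q x \<nu>"
    and "0 < cinner x (R0 x)"
  shows "(\<forall>k\<ge>1. (\<forall>\<omega>\<in>space \<nu>. 0 \<le> cinner x (Delta P R0 k \<omega> x))
            \<and> integrable \<nu> (\<lambda>\<omega>. cinner x (Delta P R0 k \<omega> x)))
       \<and> integrable \<nu> (\<lambda>\<omega>. cinner x (R_inf P R0 \<omega> x))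
       \<and> summable (\<lambda>k. integral\<^sup>L \<nu> (\<lambda>\<omega>. cinner x (Delta P R0 (Suc k) \<omega> x)))
       \<and> cinner x (R0 x) = integral\<^sup>L \<nu> (\<lambda>\<omega>. cinner x (R_inf P R0 \<omega> x))
            + (\<Sum>k. integral\<^sup>L \<nu> (\<lambda>\<omega>. cinner x (Delta P R0 (Suc k) \<omega> x)))"
proof -
  interpret energy_tree m P R0 using assms(2,3) by unfold_locales
  have "prob_space \<nu>" and sets: "sets \<nu> = sets (path_space m)"
    using assms(6) by (simp_all add: is_path_measure_def)
  interpret prob_space \<nu> by fact
  have space: "space \<nu> = space (path_space m)" by (rule sets_eq_imp_space_eq[OF sets])
  let ?r = "\<lambda>n \<omega>. cinner x (R_word P R0 (prefix \<omega> n) x)"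
  let ?d = "\<lambda>k \<omega>. cinner x (Delta P R0 (Suc k) \<omega> x)"
  have r_meas: "?r n \<in> borel_measurable \<nu>" and d_meas: "?d n \<in> borel_measurable \<nu>" for n
    unfolding Delta_def using sets by (rule borel_measurable_prefix_fun)+
  have step: "?r n \<omega> = ?r (Suc n) \<omega> + ?d n \<omega>" if "\<omega> \<in> space \<nu>" for n \<omega>
    using R_word_prefix_split[of \<omega> n x] that by (simp add: space cinner_add_right)
  have nonneg: "0 \<le> ?r n \<omega> \<and> 0 \<le> ?d n \<omega>" if "\<omega> \<in> space \<nu>" for n \<omega>
    using that unfolding space
    by (intro conjI positive_op_nonneg positive_op_R_word_prefix positive_op_Delta_Suc)
  have lim: "(\<lambda>n. ?r n \<omega>) \<longlonglongrightarrow> cinner x (R_inf P R0 \<omega> x)" if "\<omega> \<in> space \<nu>" for \<omega>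
    using that unfolding space
    by (intro bounded_linear.tendsto[OF bounded_linear_cinner_right] R_word_prefix_tendsto_R_inf)
  have r_0: "?r 0 \<omega> = cinner x (R0 x)" for \<omega> by simp
  note balance = integral_telescoping_sums[OF r_meas d_meas r_0 step nonneg lim]
  have "cinner x (R0 x) = integral\<^sup>L \<nu> (\<lambda>\<omega>. cinner x (R_inf P R0 \<omega> x))
      + (\<Sum>k. integral\<^sup>L \<nu> (?d k))"
    using sums_unique[OF balance(3), symmetric] by simp
  then show ?thesis
    using nonneg balance sums_summable[OF balance(3)]
    by (auto simp: Suc_le_eq dest!: less_imp_Suc_add)
qed

end
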